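(* For every $y\in[0,1]$, $$\frac12\le\dim_H R^{-1}(y)\le\log_2\varphi,$$ where $\varphi=(1+\sqrt5)/2$.
   Context: Define $\rho$ on binary words: for $b=b_1b_2\dots$, $\rho(b)$ is obtained by deleting every digit $b_n=0$ and replacing every $b_n=1$ by $0$ if $n$ is odd and by $1$ if $n$ is even. For $x\in(0,1]$ let $\beta(x)$ be the unique binary expansion of $x$ with infinitely many $1$'s. Define $R:[0,1]\to[0,1]$ by $R(0)=2/3$ and, for $x\in(0,1]$, $R(x)=\sum_{n\ge1}c_n2^{-n}$ where $c=\rho(\beta(x))$. $\dim_H$ denotes Hausdorff dimension. *)

theory Defs
  imports "HOL-Analysis.Analysis" "HOL-Library.Extended_Real"
begin

text \<open>beta x: the binary expansion x = sum_{n>=1} b_n 2^(-n) with infinitely many 1's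
  (digits indexed from 1; the entry at index 0 is fixed to 0 and unused).\<close>
definition beta :: "real \<Rightarrow> nat \<Rightarrow> nat" where
  "beta x = (SOME b. b 0 = 0 \<and> (\<forall>n. b n \<in> {0, 1}) \<and> infinite {n. b n = 1} \<and>
                     (\<lambda>n. real (b (Suc n)) / 2 ^ Suc n) sums x)"

text \<open>rho on infinite binary words with infinitely many 1's: the k-th digit (k>=1) of rho b
  is 1 iff the k-th occurrence of the digit 1 in b is at an even position.\<close>
definition rho :: "(nat \<Rightarrow> nat) \<Rightarrow> nat \<Rightarrow> nat" where
  "rho b k = (if k = 0 then 0
              else if even (enumerate {n. 1 \<le> n \<and> b n = 1} (k - 1)) then 1 else 0)"

definition R :: "real \<Rightarrow> real" where
  "R x = (if x = 0 then 2/3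
          else (\<Sum>k. real (rho (beta x) (Suc k)) / 2 ^ Suc k))"

definition hausdorff_pre :: "real \<Rightarrow> real \<Rightarrow> real set \<Rightarrow> ennreal" where
  "hausdorff_pre s \<delta> A =
     (INF U \<in> {U :: nat \<Rightarrow> real set. A \<subseteq> (\<Union>i. U i) \<and> (\<forall>i. bounded (U i) \<and> diameter (U i) \<le> \<delta>)}.
        \<Sum>i. ennreal (diameter (U i) powr s))"

definition hausdorff_measure :: "real \<Rightarrow> real set \<Rightarrow> ennreal" where
  "hausdorff_measure s A = (SUP \<delta> \<in> {0<..}. hausdorff_pre s \<delta> A)"

definition hausdorff_dim :: "real set \<Rightarrow> ereal" where
  "hausdorff_dim A = Inf {ereal s | s. 0 \<le> s \<and> hausdorff_measure s A = 0}"

end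

theory Submission
  imports Defs "HOL-Number_Theory.Fib"
begin

(* Write y in binary as c.  A point x lies in the fiber of y exactly when the ones in the
   expansion of x, taken in order, sit at even positions precisely where c has a one.

   Lower bound: double every binary digit of an arbitrary t in (0,1] into a block of two
   digits, and put the one of the k-th nonzero block at its even or odd place according to
   the k-th digit of c.  The resulting map g sends (0,1] into the fiber and satisfies
   |t - t'|^2 <= 12 |g t - g t'|, so a cover of the fiber by sets U_i pulls back to a cover
   of (0,1] by intervals of length O(diam U_i ^ (1/2)); hence the fiber has positive
   s-dimensional measure for s <= 1/2.

   Upper bound: y has at most two binary expansions, and for each of them the admissible
   prefixes of length n obey a Fibonacci recursion, so there are O(phi^n) of them.  The fiber
   is therefore covered by O(phi^n) dyadic intervals of length 2^-n. *)

section \<open>Binary digit sequences\<close>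

definition binary_seq :: "(nat \<Rightarrow> nat) \<Rightarrow> bool" where
  "binary_seq d \<longleftrightarrow> (\<forall>n. d n \<in> {0, 1})"

definition digit_term :: "(nat \<Rightarrow> nat) \<Rightarrow> nat \<Rightarrow> real" where
  "digit_term d n = real (d (Suc n)) / 2 ^ Suc n"

definition binval :: "(nat \<Rightarrow> nat) \<Rightarrow> real" where
  "binval d = (\<Sum>n. digit_term d n)"

definition binval_tail :: "(nat \<Rightarrow> nat) \<Rightarrow> nat \<Rightarrow> real" where
  "binval_tail d m = (\<Sum>n. digit_term d (n + m))"

lemma binary_seq_cases: "binary_seq d \<Longrightarrow> d n = 0 \<or> d n = 1"
  unfolding binary_seq_def by auto

lemma digit_term_nonneg: "0 \<le> digit_term d n"
  by (simp add: digit_term_def)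

lemma digit_term_le: "binary_seq d \<Longrightarrow> digit_term d n \<le> (1/2) ^ Suc n"
  using binary_seq_cases[of d "Suc n"] by (auto simp: digit_term_def power_one_over)

lemma sums_half_powers: "(\<lambda>n. (1/2::real) ^ Suc (n + m)) sums (1/2) ^ m"
proof -
  have "(\<lambda>n. (1/2::real) ^ n * (1/2) ^ Suc m) sums (2 * (1/2) ^ Suc m)"
    using sums_mult2[OF geometric_sums[of "1/2::real"], of "(1/2) ^ Suc m"] by simp
  moreover have "(1/2::real) ^ Suc (n + m) = (1/2) ^ n * (1/2) ^ Suc m" for n
    by (simp add: power_add[symmetric])
  ultimately show ?thesis by simp
qed

lemma summable_digit_term_shift: "binary_seq d \<Longrightarrow> summable (\<lambda>n. digit_term d (n + m))"
  by (rule summable_comparison_test[OF _ sums_summable[OF sums_half_powers[of m]]])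
     (use digit_term_le[of d] digit_term_nonneg in \<open>auto intro!: exI[of _ 0]\<close>)

lemma summable_digit_term: "binary_seq d \<Longrightarrow> summable (digit_term d)"
  using summable_digit_term_shift[of d 0] by simp

lemma binval_tail_nonneg: "binary_seq d \<Longrightarrow> 0 \<le> binval_tail d m"
  unfolding binval_tail_def
  by (intro suminf_nonneg summable_digit_term_shift) (auto simp: digit_term_nonneg)

lemma binval_tail_le: "binary_seq d \<Longrightarrow> binval_tail d m \<le> (1/2) ^ m"
  unfolding binval_tail_def sums_unique[OF sums_half_powers, of m]
  by (intro suminf_le summable_digit_term_shift sums_summable[OF sums_half_powers])
     (use digit_term_le[of d] in auto)

lemma binval_split: "binary_seq d \<Longrightarrow> binval d = (\<Sum>n<m. digit_term d n) + binval_tail d m"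
  unfolding binval_def binval_tail_def
  using suminf_split_initial_segment[OF summable_digit_term, of d m] by simp

lemma binval_le_1: "binary_seq d \<Longrightarrow> binval d \<le> 1"
  using binval_split[of d 0] binval_tail_le[of d 0] by simp

lemma binval_tail_Suc: "binary_seq d \<Longrightarrow> binval_tail d m = digit_term d m + binval_tail d (Suc m)"
  unfolding binval_tail_def
  using suminf_split_head[OF summable_digit_term_shift[of d m]] by simp

lemma binval_tail_eq_0D:
  assumes "binary_seq d" "binval_tail d m = 0" "m < n"
  shows "d n = 0"
proof -
  have "\<forall>k. digit_term d (k + m) = 0"
    using suminf_eq_zero_iff[OF summable_digit_term_shift[OF assms(1), of m]] assms(2)
    unfolding binval_tail_def by (auto simp: digit_term_nonneg)
  from this[rule_format, of "n - Suc m"] assms(3) show ?thesis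
    by (simp add: digit_term_def Suc_diff_Suc)
qed

lemma binval_tail_eq_maxD:
  assumes d: "binary_seq d" and tail: "binval_tail d m = (1/2) ^ m" and "m < n"
  shows "d n = 1"
proof -
  let ?g = "\<lambda>k. (1/2) ^ Suc (k + m) - digit_term d (k + m)"
  have "?g sums ((1/2) ^ m - binval_tail d m)"
    unfolding binval_tail_def
    by (intro sums_diff sums_half_powers summable_sums summable_digit_term_shift d)
  then have "?g sums 0" using tail by simp
  then have "\<forall>k. ?g k = 0"
    using sums_unique[of ?g 0] suminf_eq_zero_iff[of ?g] digit_term_le[OF d] by (auto simp: sums_iff)
  from this[rule_format, of "n - Suc m"] \<open>m < n\<close> have "real (d n) / 2 ^ n = (1/2) ^ n"
    by (simp add: digit_term_def Suc_diff_Suc)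
  then show ?thesis by (simp add: power_one_over)
qed

lemma abs_binval_diff_le:
  assumes "binary_seq d" "binary_seq d'" "\<forall>n\<le>k. d n = d' n"
  shows "\<bar>binval d - binval d'\<bar> \<le> (1/2) ^ k"
proof -
  have "(\<Sum>n<k. digit_term d n) = (\<Sum>n<k. digit_term d' n)"
    using assms(3) by (intro sum.cong) (auto simp: digit_term_def)
  then show ?thesis
    using binval_split[OF assms(1), of k] binval_split[OF assms(2), of k]
      binval_tail_nonneg[OF assms(1), of k] binval_tail_le[OF assms(1), of k]
      binval_tail_nonneg[OF assms(2), of k] binval_tail_le[OF assms(2), of k] by linarith
qed

lemma first_difference_exists:
  assumes "d \<noteq> d'" "d 0 = d' 0"
  obtains k where "\<forall>n\<le>k. d n = d' n" "d (Suc k) \<noteq> d' (Suc k)"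
proof -
  define j where "j = (LEAST m. d m \<noteq> d' m)"
  have j: "d j \<noteq> d' j"
    unfolding j_def by (rule LeastI_ex) (use assms(1) in \<open>auto simp: fun_eq_iff\<close>)
  have below: "\<forall>n<j. d n = d' n" unfolding j_def using not_less_Least by blast
  obtain k where "j = Suc k" using j assms(2) by (cases j) auto
  with j below show ?thesis by (intro that[of k]) auto
qed

lemma binval_eq_first_difference:
  assumes d: "binary_seq d" "binary_seq d'" and agree: "\<forall>n\<le>k. d n = d' n"
    and differ: "d (Suc k) = 1" "d' (Suc k) = 0" and eq: "binval d = binval d'"
  shows "\<forall>n > Suc k. d n = 0 \<and> d' n = 1"
proof -
  have "(\<Sum>n<k. digit_term d n) = (\<Sum>n<k. digit_term d' n)"
    using agree by (intro sum.cong) (auto simp: digit_term_def)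
  moreover have "digit_term d k = (1/2) ^ Suc k" "digit_term d' k = 0"
    using differ by (simp_all add: digit_term_def power_one_over)
  moreover note eq binval_split[OF d(1), of k] binval_split[OF d(2), of k]
    binval_tail_Suc[OF d(1), of k] binval_tail_Suc[OF d(2), of k]
  ultimately have "(1/2) ^ Suc k + binval_tail d (Suc k) = binval_tail d' (Suc k)"
    by linarith
  moreover note binval_tail_nonneg[OF d(1), of "Suc k"] binval_tail_le[OF d(2), of "Suc k"]
  ultimately have "binval_tail d (Suc k) = 0" "binval_tail d' (Suc k) = (1/2) ^ Suc k"
    by linarith+
  then show ?thesis using binval_tail_eq_0D[OF d(1)] binval_tail_eq_maxD[OF d(2)] by blast
qed

lemma binval_eq_finite_ones_iff:
  assumes d: "binary_seq d" "binary_seq d'" "d 0 = 0" "d' 0 = 0"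
    and "d \<noteq> d'" and eq: "binval d = binval d'"
  shows "finite {n. d n = 1} \<longleftrightarrow> infinite {n. d' n = 1}"
proof -
  obtain k where agree: "\<forall>n\<le>k. d n = d' n" and differ: "d (Suc k) \<noteq> d' (Suc k)"
    using first_difference_exists[OF \<open>d \<noteq> d'\<close>] d by auto
  have finite: "finite {n. e n = 1}" if "\<forall>n > Suc k. e n = 0" for e :: "nat \<Rightarrow> nat"
    by (rule finite_subset[of _ "{..Suc k}"]) (use that in \<open>auto simp: not_le[symmetric]\<close>)
  have infinite: "infinite {n. e n = 1}" if "\<forall>n > Suc k. e n = 1" for e :: "nat \<Rightarrow> nat"
    unfolding infinite_nat_iff_unbounded
  proof
    fix m
    show "\<exists>n>m. n \<in> {n. e n = 1}" using that by (intro exI[of _ "m + Suc (Suc k)"]) auto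
  qed
  consider "d (Suc k) = 1" "d' (Suc k) = 0" | "d (Suc k) = 0" "d' (Suc k) = 1"
    using differ binary_seq_cases[OF d(1)] binary_seq_cases[OF d(2)] by metis
  then show ?thesis
  proof cases
    case 1
    then show ?thesis using binval_eq_first_difference[OF d(1,2) agree 1 eq] finite infinite
      by blast
  next
    case 2
    have "\<forall>n\<le>k. d' n = d n" using agree by simp
    then show ?thesis
      using binval_eq_first_difference[OF d(2,1) _ 2(2,1) eq[symmetric]] finite infinite by blast
  qed
qed

lemma infinite_ones_if_partial_sums_less:
  assumes d: "binary_seq d" and less: "\<And>m. (\<Sum>n<m. digit_term d n) < binval d"
  shows "infinite {n. d n = 1}"
proof
  assume "finite {n. d n = 1}"
  then obtain M where M: "\<And>n. d n = 1 \<Longrightarrow> n \<le> M"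
    using finite_nat_set_iff_bounded_le by auto
  have "digit_term d (n + M) = 0" for n
    using M[of "Suc (n + M)"] binary_seq_cases[OF d, of "Suc (n + M)"] by (auto simp: digit_term_def)
  then have "binval_tail d M = 0" by (simp add: binval_tail_def)
  then show False using binval_split[OF d, of M] less[of M] by simp
qed


section \<open>The expansion beta\<close>

definition beta_expansion :: "(nat \<Rightarrow> nat) \<Rightarrow> real \<Rightarrow> bool" where
  "beta_expansion b x \<longleftrightarrow> b 0 = 0 \<and> (\<forall>n. b n \<in> {0, 1}) \<and> infinite {n. b n = 1} \<and>
                            (\<lambda>n. real (b (Suc n)) / 2 ^ Suc n) sums x"

lemma beta_expansion_iff:
  "beta_expansion b x \<longleftrightarrow> b 0 = 0 \<and> binary_seq b \<and> infinite {n. b n = 1} \<and> binval b = x"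
proof -
  have "(\<lambda>n. real (b (Suc n)) / 2 ^ Suc n) = digit_term b"
    by (simp add: digit_term_def fun_eq_iff)
  then show ?thesis
    unfolding beta_expansion_def binval_def
    using summable_digit_term[of b] by (auto simp: binary_seq_def sums_iff)
qed

lemma beta_expansion_unique: "beta_expansion b x \<Longrightarrow> beta_expansion b' x \<Longrightarrow> b = b'"
  unfolding beta_expansion_iff using binval_eq_finite_ones_iff[of b b'] by metis

text \<open>The digits of the lower dyadic approximations (ceiling (2^m x) - 1) / 2^m of x.\<close>

lemma lower_dyadic_digits:
  fixes x :: real
  assumes x: "0 < x" "x \<le> 1"
  obtains d where "binary_seq d" "d 0 = 0"
    "\<And>m. (\<Sum>n<m. digit_term d n) < x" "\<And>m. x - (1/2) ^ m \<le> (\<Sum>n<m. digit_term d n)"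
proof -
  define a :: "nat \<Rightarrow> int" where "a n = \<lceil>2 ^ n * x\<rceil> - 1" for n
  have a_less: "real_of_int (a n) < 2 ^ n * x" for n unfolding a_def by linarith
  have a_ge: "2 ^ n * x \<le> real_of_int (a n) + 1" for n unfolding a_def by linarith
  have a_Suc: "a (Suc n) - 2 * a n \<in> {0, 1}" for n
  proof -
    have "real_of_int (a (Suc n)) + 1 > 2 * real_of_int (a n)"
      "real_of_int (a (Suc n)) < 2 * real_of_int (a n) + 2"
      using a_less[of n] a_ge[of n] a_less[of "Suc n"] a_ge[of "Suc n"] by simp_all
    then have "a (Suc n) + 1 > 2 * a n" "a (Suc n) < 2 * a n + 2" by linarith+
    then show ?thesis by auto
  qed
  define d :: "nat \<Rightarrow> nat" where "d n = (if n = 0 then 0 else nat (a n - 2 * a (n - 1)))" for n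
  have d_Suc: "real (d (Suc n)) = real_of_int (a (Suc n)) - 2 * real_of_int (a n)" for n
    using a_Suc[of n] by (auto simp: d_def)
  have partial: "(\<Sum>n<m. digit_term d n) = real_of_int (a m) / 2 ^ m" for m
  proof (induction m)
    case 0
    have "a 0 = 0" unfolding a_def using x by (simp add: ceiling_eq_iff)
    then show ?case by simp
  next
    case (Suc m)
    then show ?case by (simp add: digit_term_def d_Suc field_simps)
  qed
  show ?thesis
  proof (rule that)
    show "binary_seq d"
      unfolding binary_seq_def
    proof
      fix n
      show "d n \<in> {0, 1}" using a_Suc[of "n - 1"] by (cases n) (auto simp: d_def)
    qed
    show "d 0 = 0" by (simp add: d_def)
    show "(\<Sum>n<m. digit_term d n) < x" for m
      using partial[of m] a_less[of m] by (simp add: pos_divide_less_eq mult.commute)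
    show "x - (1/2) ^ m \<le> (\<Sum>n<m. digit_term d n)" for m
    proof -
      have "x - (1/2) ^ m = (2 ^ m * x - 1) / 2 ^ m" by (simp add: field_simps power_one_over)
      also have "\<dots> \<le> real_of_int (a m) / 2 ^ m"
        by (rule divide_right_mono) (use a_ge[of m] in auto)
      finally show ?thesis by (simp add: partial)
    qed
  qed
qed

lemma beta_expansion_exists:
  fixes x :: real
  assumes "0 < x" "x \<le> 1"
  shows "\<exists>b. beta_expansion b x"
proof -
  obtain d where d: "binary_seq d" "d 0 = 0"
    and below: "\<And>m. (\<Sum>n<m. digit_term d n) < x"
    and above: "\<And>m. x - (1/2) ^ m \<le> (\<Sum>n<m. digit_term d n)"
    using lower_dyadic_digits[OF assms] by blast
  have "(\<lambda>m. \<Sum>n<m. digit_term d n) \<longlonglongrightarrow> x"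
  proof (rule real_tendsto_sandwich)
    have "(\<lambda>m. x - (1/2::real) ^ m) \<longlonglongrightarrow> x - 0"
      by (intro tendsto_intros LIMSEQ_power_zero) simp
    then show "(\<lambda>m. x - (1/2::real) ^ m) \<longlonglongrightarrow> x" by simp
    show "\<forall>\<^sub>F m in sequentially. x - (1/2) ^ m \<le> (\<Sum>n<m. digit_term d n)"
      using above by (intro always_eventually allI)
    show "\<forall>\<^sub>F m in sequentially. (\<Sum>n<m. digit_term d n) \<le> x"
      using below by (intro always_eventually allI less_imp_le)
  qed simp
  then have "binval d = x"
    unfolding binval_def by (simp add: sums_def sums_unique[symmetric])
  moreover have "infinite {n. d n = 1}"
    by (rule infinite_ones_if_partial_sums_less[OF d(1)]) (use below \<open>binval d = x\<close> in simp)
  ultimately show ?thesis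
    unfolding beta_expansion_iff using d by blast
qed

lemma beta_expansion_beta: "0 < x \<Longrightarrow> x \<le> 1 \<Longrightarrow> beta_expansion (beta x) x"
  using beta_expansion_exists[of x] unfolding beta_def beta_expansion_def[abs_def]
  by (rule someI_ex)

lemma beta_eqI: "beta_expansion b x \<Longrightarrow> beta x = b"
  using beta_expansion_unique someI_ex[of "\<lambda>b. beta_expansion b x"]
  unfolding beta_def beta_expansion_def[abs_def] by blast

lemma
  assumes "0 < x" "x \<le> 1"
  shows beta_0: "beta x 0 = 0" and binary_seq_beta: "binary_seq (beta x)"
    and infinite_ones_beta: "infinite {n. beta x n = 1}" and binval_beta: "binval (beta x) = x"
  using beta_expansion_beta[OF assms] unfolding beta_expansion_iff by auto

lemma binval_surj:
  assumes "0 \<le> y" "y \<le> 1"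
  obtains c where "binary_seq c" "c 0 = 0" "binval c = y"
proof (cases "y = 0")
  case True
  then show ?thesis
    by (intro that[of "\<lambda>_. 0"]) (simp_all add: binary_seq_def binval_def digit_term_def)
next
  case False
  with assms have "0 < y" by simp
  then show ?thesis using assms beta_0 binary_seq_beta binval_beta by (intro that[of "beta y"]) auto
qed

lemma R_eq_binval_rho: "x \<noteq> 0 \<Longrightarrow> R x = binval (rho (beta x))"
  by (simp add: R_def binval_def digit_term_def)


section \<open>Counting ones and the map rho\<close>

definition ones_below :: "(nat \<Rightarrow> nat) \<Rightarrow> nat \<Rightarrow> nat" where
  "ones_below b i = card {j. 1 \<le> j \<and> j < i \<and> b j = 1}"

lemma ones_below_Suc:
  assumes "1 \<le> i"
  shows "ones_below b (Suc i) = ones_below b i + (if b i = 1 then 1 else 0)"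
proof -
  let ?S = "{j. 1 \<le> j \<and> j < i \<and> b j = 1}"
  have "finite ?S" by (rule finite_subset[of _ "{..<i}"]) auto
  moreover have "{j. 1 \<le> j \<and> j < Suc i \<and> b j = 1} = (if b i = 1 then insert i ?S else ?S)"
    using assms by (auto simp: less_Suc_eq)
  ultimately show ?thesis unfolding ones_below_def by simp
qed

lemma ones_below_cong: "(\<And>j. j < i \<Longrightarrow> b j = b' j) \<Longrightarrow> ones_below b i = ones_below b' i"
  unfolding ones_below_def by (rule arg_cong[where f = card]) auto

lemma enumerate_card_less:
  fixes A :: "nat set"
  assumes A: "infinite A" and "m \<in> A"
  shows "enumerate A (card {a\<in>A. a < m}) = m"
proof -
  have mono: "strict_mono (enumerate A)" by (rule strict_mono_enumerate[OF A])
  obtain k where k: "m = enumerate A k" using \<open>m \<in> A\<close> range_enumerate[OF A] by blast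
  have "{a\<in>A. a < m} = enumerate A ` {..<k}"
  proof
    show "{a\<in>A. a < m} \<subseteq> enumerate A ` {..<k}"
    proof clarify
      fix a assume "a \<in> A" "a < m"
      moreover obtain i where "a = enumerate A i" using \<open>a \<in> A\<close> range_enumerate[OF A] by blast
      ultimately show "a \<in> enumerate A ` {..<k}" using k strict_mono_less[OF mono] by auto
    qed
    show "enumerate A ` {..<k} \<subseteq> {a\<in>A. a < m}"
      using k strict_mono_less[OF mono] enumerate_in_set[OF A] by auto
  qed
  moreover have "card (enumerate A ` {..<k}) = k"
    by (simp add: card_image strict_mono_imp_inj_on[OF mono])
  ultimately show ?thesis using k by simp
qed

lemma rho_at_one:
  assumes "infinite {n. 1 \<le> n \<and> b n = 1}" "1 \<le> m" "b m = 1"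
  shows "rho b (Suc (ones_below b m)) = (if even m then 1 else 0)"
proof -
  let ?A = "{n. 1 \<le> n \<and> b n = 1}"
  have "card {a\<in>?A. a < m} = ones_below b m"
    unfolding ones_below_def by (rule arg_cong[where f = card]) blast
  then have "enumerate ?A (ones_below b m) = m"
    using enumerate_card_less[OF assms(1)] assms(2,3) by fastforce
  then show ?thesis by (simp add: rho_def)
qed

lemma binary_seq_rho: "binary_seq (rho b)"
  by (simp add: binary_seq_def rho_def)

lemma rho_0: "rho b 0 = 0"
  by (simp add: rho_def)


section \<open>A map from (0,1] into a fiber\<close>

text \<open>Digit j of w is doubled into the positions 2j - 1 and 2j.  If it is the k-th one of w,
  its one is put at the even position exactly when c k = 1, so that rho recovers c.\<close>

definition embed_digits :: "(nat \<Rightarrow> nat) \<Rightarrow> (nat \<Rightarrow> nat) \<Rightarrow> nat \<Rightarrow> nat" where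
  "embed_digits c w n =
     (if n \<noteq> 0 \<and> w ((n + 1) div 2) = 1 \<and> (c (ones_below w (Suc ((n + 1) div 2))) = 1 \<longleftrightarrow> even n)
      then 1 else 0)"

definition embed_block :: "(nat \<Rightarrow> nat) \<Rightarrow> (nat \<Rightarrow> nat) \<Rightarrow> nat \<Rightarrow> real" where
  "embed_block c w j =
     (if w j = 1 then (if c (ones_below w (Suc j)) = 1 then 1 else 2) / 4 ^ j else 0)"

definition fiber_map :: "(nat \<Rightarrow> nat) \<Rightarrow> real \<Rightarrow> real" where
  "fiber_map c t = binval (embed_digits c (beta t))"

lemma binary_seq_embed_digits: "binary_seq (embed_digits c w)"
  by (simp add: binary_seq_def embed_digits_def)

lemma embed_digits_0: "embed_digits c w 0 = 0"
  by (simp add: embed_digits_def)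

lemma embed_digits_eq_1D:
  assumes "embed_digits c w m = 1"
  shows "1 \<le> m" "w ((m + 1) div 2) = 1" "c (ones_below w (Suc ((m + 1) div 2))) = 1 \<longleftrightarrow> even m"
proof -
  have h: "m \<noteq> 0 \<and> w ((m + 1) div 2) = 1 \<and> (c (ones_below w (Suc ((m + 1) div 2))) = 1 \<longleftrightarrow> even m)"
  proof (rule ccontr)
    assume "\<not> ?thesis"
    then have "embed_digits c w m = 0" unfolding embed_digits_def by (rule if_not_P)
    with assms show False by simp
  qed
  then show "1 \<le> m" by simp
  from h show "w ((m + 1) div 2) = 1" "c (ones_below w (Suc ((m + 1) div 2))) = 1 \<longleftrightarrow> even m"
    by blast+
qed

lemma embed_digits_at_block:
  assumes "w 0 = 0" "w j = 1"
  obtains p where "embed_digits c w p = 1" "(p + 1) div 2 = j" "p \<le> 2 * j"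
proof -
  obtain i where j: "j = Suc i" using assms by (cases j) auto
  define p where "p = (if c (ones_below w (Suc j)) = 1 then 2 * j else 2 * j - 1)"
  have "(p + 1) div 2 = j" "even p \<longleftrightarrow> c (ones_below w (Suc j)) = 1" "p \<noteq> 0"
    unfolding p_def j by auto
  then show ?thesis using assms(2) by (intro that[of p]) (auto simp: embed_digits_def p_def)
qed

lemma embed_digits_pair_sum:
  "digit_term (embed_digits c w) (2 * n) + digit_term (embed_digits c w) (Suc (2 * n))
     = embed_block c w (Suc n)"
proof -
  have "(4::real) ^ Suc n = (2 ^ 2) ^ Suc n" by simp
  also have "\<dots> = 2 ^ (2 * Suc n)" by (simp only: power_mult)
  finally have "(2::real) ^ Suc (Suc (2 * n)) = 4 ^ Suc n" by simp
  moreover have "(Suc (2 * n) + 1) div 2 = Suc n" "(Suc (Suc (2 * n)) + 1) div 2 = Suc n"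
    by simp_all
  ultimately show ?thesis
    by (auto simp: digit_term_def embed_digits_def embed_block_def field_simps)
qed

lemma sums_embed_block: "(\<lambda>n. embed_block c w (Suc n)) sums binval (embed_digits c w)"
proof -
  have "digit_term (embed_digits c w) sums binval (embed_digits c w)"
    unfolding binval_def by (intro summable_sums summable_digit_term binary_seq_embed_digits)
  from sums_group[OF this, of 2] show ?thesis
    using embed_digits_pair_sum by (simp add: mult.commute)
qed

lemma infinite_ones_embed_digits:
  assumes "w 0 = 0" "infinite {n. w n = 1}"
  shows "infinite {n. embed_digits c w n = 1}"
proof
  assume fin: "finite {n. embed_digits c w n = 1}"
  have "{n. w n = 1} \<subseteq> (\<lambda>n. (n + 1) div 2) ` {n. embed_digits c w n = 1}"
  proof
    fix j assume "j \<in> {n. w n = 1}"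
    then have "w j = 1" by simp
    then obtain p where "embed_digits c w p = 1" "(p + 1) div 2 = j" "p \<le> 2 * j"
      by (rule embed_digits_at_block[where w = w, OF assms(1)])
    then show "j \<in> (\<lambda>n. (n + 1) div 2) ` {n. embed_digits c w n = 1}" by force
  qed
  then show False using assms(2) fin finite_surj by blast
qed

lemma embed_digits_ones_inj:
  assumes "embed_digits c w a = 1" "embed_digits c w a' = 1" "(a + 1) div 2 = (a' + 1) div 2"
  shows "a = a'"
proof -
  have "even a \<longleftrightarrow> even a'" using embed_digits_eq_1D(3)[OF assms(1)] embed_digits_eq_1D(3)[OF assms(2)] assms(3)
    by metis
  with assms(3) show ?thesis by (cases "even a") (auto elim!: evenE oddE)
qed

lemma ones_below_embed_digits:
  assumes "w 0 = 0" and m: "embed_digits c w m = 1"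
  shows "ones_below w (Suc ((m + 1) div 2)) = Suc (ones_below (embed_digits c w) m)"
proof -
  define j where "j = (m + 1) div 2"
  let ?half = "\<lambda>n. (n + 1) div 2"
  let ?S = "{a. 1 \<le> a \<and> a < m \<and> embed_digits c w a = 1}"
  let ?T = "{i. 1 \<le> i \<and> i < j \<and> w i = 1}"
  have inj: "inj_on ?half ?S" by (rule inj_onI) (use embed_digits_ones_inj in auto)
  have image: "?half ` ?S = ?T"
  proof
    show "?half ` ?S \<subseteq> ?T"
    proof
      fix i assume "i \<in> ?half ` ?S"
      then obtain a where a: "1 \<le> a" "a < m" "embed_digits c w a = 1" "i = ?half a" by auto
      have "i \<le> j" unfolding j_def a(4) using a(2) by (simp add: div_le_mono)
      moreover have "i \<noteq> j" using embed_digits_ones_inj[OF a(3) m] a(2,4) unfolding j_def by auto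
      ultimately show "i \<in> ?T" using a embed_digits_eq_1D(2)[OF a(3)] by auto
    qed
    show "?T \<subseteq> ?half ` ?S"
    proof
      fix i assume i: "i \<in> ?T"
      then have "w i = 1" by simp
      then obtain p where p: "embed_digits c w p = 1" "?half p = i" "p \<le> 2 * i"
        by (rule embed_digits_at_block[where w = w, OF assms(1)])
      have "j * 2 \<le> m + 1" unfolding j_def by (rule div_times_less_eq_dividend)
      moreover have "i < j" using i by simp
      ultimately have "p < m" using p(3) by linarith
      then show "i \<in> ?half ` ?S" using p embed_digits_eq_1D(1)[OF p(1)] by force
    qed
  qed
  have "ones_below (embed_digits c w) m = ones_below w j"
    unfolding ones_below_def using card_image[OF inj] image by simp
  moreover have "w j = 1" "1 \<le> j" using embed_digits_eq_1D[OF m] unfolding j_def by auto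
  ultimately show ?thesis using ones_below_Suc[of j w] unfolding j_def by simp
qed

lemma rho_embed_digits:
  assumes c: "binary_seq c" "c 0 = 0" and w: "w 0 = 0" "infinite {n. w n = 1}"
  shows "rho (embed_digits c w) = c"
proof
  fix k
  let ?B = "embed_digits c w"
  let ?A = "{n. 1 \<le> n \<and> ?B n = 1}"
  have "{n. ?B n = 1} = ?A" using embed_digits_eq_1D(1) by blast
  then have A: "infinite ?A" using infinite_ones_embed_digits[OF w, of c] by simp
  show "rho ?B k = c k"
  proof (cases k)
    case 0
    then show ?thesis using c(2) by (simp add: rho_0)
  next
    case (Suc i)
    define m where "m = enumerate ?A i"
    have m: "1 \<le> m" "?B m = 1" using enumerate_in_set[OF A] unfolding m_def by auto
    have "card {a\<in>?A. a < m} = ones_below ?B m"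
      unfolding ones_below_def by (rule arg_cong[where f = card]) blast
    then have "enumerate ?A (ones_below ?B m) = enumerate ?A i"
      using enumerate_card_less[OF A, of m] m unfolding m_def[symmetric] by simp
    then have i: "ones_below ?B m = i"
      using strict_mono_imp_inj_on[OF strict_mono_enumerate[OF A]] by (auto dest: injD)
    have "c (Suc i) = 1 \<longleftrightarrow> even m"
      using embed_digits_eq_1D(3)[OF m(2)] ones_below_embed_digits[OF w(1) m(2)] i by simp
    then have "c (Suc i) = (if even m then 1 else 0)"
      using binary_seq_cases[OF c(1), of "Suc i"] by auto
    then show ?thesis using rho_at_one[OF A m] i Suc by simp
  qed
qed

lemma
  assumes "0 < t" "t \<le> 1"
  shows fiber_map_pos: "0 < fiber_map c t" and fiber_map_le_1: "fiber_map c t \<le> 1"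
    and beta_fiber_map: "beta (fiber_map c t) = embed_digits c (beta t)"
proof -
  let ?B = "embed_digits c (beta t)"
  have inf: "infinite {n. ?B n = 1}"
    using infinite_ones_embed_digits beta_0[OF assms] infinite_ones_beta[OF assms] by blast
  then obtain n where n: "?B n = 1" using not_finite_existsD by blast
  have "0 < digit_term ?B (n - 1)"
    using n embed_digits_eq_1D(1)[OF n] by (simp add: digit_term_def)
  then show "0 < fiber_map c t"
    unfolding fiber_map_def binval_def
    by (intro suminf_pos2 summable_digit_term binary_seq_embed_digits) (auto simp: digit_term_nonneg)
  show "fiber_map c t \<le> 1"
    unfolding fiber_map_def by (intro binval_le_1 binary_seq_embed_digits)
  have "beta_expansion ?B (fiber_map c t)"
    unfolding beta_expansion_iff fiber_map_def
    using embed_digits_0 binary_seq_embed_digits inf by blast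
  then show "beta (fiber_map c t) = ?B" by (rule beta_eqI)
qed

lemma fiber_map_into_fiber:
  assumes "binary_seq c" "c 0 = 0" "binval c = y"
  shows "fiber_map c ` {0<..1} \<subseteq> {x \<in> {0..1}. R x = y}"
proof
  fix x assume "x \<in> fiber_map c ` {0<..1}"
  then obtain t where t: "0 < t" "t \<le> 1" and x: "x = fiber_map c t" by auto
  have "R x = binval (rho (embed_digits c (beta t)))"
    using R_eq_binval_rho fiber_map_pos[OF t, of c] beta_fiber_map[OF t, of c] x by simp
  also have "\<dots> = y"
    using rho_embed_digits[OF assms(1,2) beta_0[OF t] infinite_ones_beta[OF t]] assms(3) by simp
  finally show "x \<in> {x \<in> {0..1}. R x = y}"
    using fiber_map_pos[OF t, of c] fiber_map_le_1[OF t, of c] x by simp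
qed


section \<open>An inverse Hoelder estimate\<close>

lemma embed_block_nonneg: "0 \<le> embed_block c w j"
  by (simp add: embed_block_def)

lemma embed_block_ge: "w j = 1 \<Longrightarrow> 1 / 4 ^ j \<le> embed_block c w j"
  by (simp add: embed_block_def divide_right_mono)

lemma embed_block_eq_0: "w j = 0 \<Longrightarrow> embed_block c w j = 0"
  by (simp add: embed_block_def)

lemma embed_block_cong:
  "(\<And>i. i \<le> k \<Longrightarrow> w i = w' i) \<Longrightarrow> j \<le> k \<Longrightarrow> embed_block c w j = embed_block c w' j"
  unfolding embed_block_def using ones_below_cong[of "Suc j" w w'] by auto

lemma
  shows summable_embed_block: "summable (\<lambda>n. embed_block c w (n + m))"
    and embed_block_tail_le: "(\<Sum>n. embed_block c w (n + m)) \<le> 8 / (3 * 4 ^ m)"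
proof -
  have bound: "embed_block c w (n + m) \<le> (1/4) ^ n * (2 / 4 ^ m)" for n
  proof -
    have "embed_block c w (n + m) \<le> 2 / 4 ^ (n + m)"
      by (simp add: embed_block_def divide_right_mono)
    also have "\<dots> = (1/4) ^ n * (2 / 4 ^ m)"
      by (simp add: power_add power_one_over)
    finally show ?thesis .
  qed
  have geometric: "(\<lambda>n. (1/4::real) ^ n * (2 / 4 ^ m)) sums (8 / (3 * 4 ^ m))"
    using sums_mult2[OF geometric_sums[of "1/4::real"], of "2 / 4 ^ m"] by simp
  show "summable (\<lambda>n. embed_block c w (n + m))"
    by (rule summable_comparison_test[OF _ sums_summable[OF geometric]])
       (use bound embed_block_nonneg in \<open>auto intro!: exI[of _ 0]\<close>)
  then show "(\<Sum>n. embed_block c w (n + m)) \<le> 8 / (3 * 4 ^ m)"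
    unfolding sums_unique[OF geometric] by (intro suminf_le bound sums_summable[OF geometric])
qed

lemma suminf_diff_first_difference:
  fixes f g :: "nat \<Rightarrow> real"
  assumes "summable f" "summable g" "\<And>n. n < k \<Longrightarrow> f n = g n"
  shows "suminf f - suminf g = f k - g k + ((\<Sum>n. f (n + Suc k)) - (\<Sum>n. g (n + Suc k)))"
proof -
  have "sum f {..<k} = sum g {..<k}" using assms(3) by (intro sum.cong) auto
  then show ?thesis
    using suminf_split_initial_segment[OF assms(1), of "Suc k"]
      suminf_split_initial_segment[OF assms(2), of "Suc k"] by simp
qed

text \<open>If the expansions of t and t' first differ at place k + 1, the block of t there
  outweighs everything t' can put in later blocks.\<close>

lemma fiber_map_gap:
  assumes t: "0 < t" "t \<le> 1" and t': "0 < t'" "t' \<le> 1"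
    and agree: "\<forall>n\<le>k. beta t n = beta t' n" and differ: "beta t (Suc k) = 1" "beta t' (Suc k) = 0"
  shows "1 / (3 * 4 ^ Suc k) \<le> fiber_map c t - fiber_map c t'"
proof -
  let ?f = "\<lambda>n. embed_block c (beta t) (Suc n)" and ?g = "\<lambda>n. embed_block c (beta t') (Suc n)"
  have "summable ?f" "summable ?g" using summable_embed_block[of c _ 1] by simp_all
  moreover have "?f n = ?g n" if "n < k" for n
    using embed_block_cong[of k "beta t" "beta t'"] agree that by simp
  ultimately have split: "fiber_map c t - fiber_map c t'
      = ?f k - ?g k + ((\<Sum>n. ?f (n + Suc k)) - (\<Sum>n. ?g (n + Suc k)))"
    unfolding fiber_map_def sums_unique[OF sums_embed_block] by (rule suminf_diff_first_difference)
  have "1 / 4 ^ Suc k \<le> ?f k" "?g k = 0"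
    using embed_block_ge[of "beta t" "Suc k" c, OF differ(1)]
      embed_block_eq_0[of "beta t'" "Suc k" c, OF differ(2)] by simp_all
  moreover have "0 \<le> (\<Sum>n. ?f (n + Suc k))"
    using summable_embed_block[of c "beta t" "Suc (Suc k)"]
    by (intro suminf_nonneg) (simp_all add: embed_block_nonneg)
  moreover have "(\<Sum>n. ?g (n + Suc k)) \<le> (2/3) * (1 / 4 ^ Suc k)"
    using embed_block_tail_le[of c "beta t'" "Suc (Suc k)"] by simp
  ultimately show ?thesis using split by simp
qed

lemma fiber_map_inverse_holder:
  assumes t: "0 < t" "t \<le> 1" and t': "0 < t'" "t' \<le> 1"
  shows "(t - t')\<^sup>2 \<le> 12 * \<bar>fiber_map c t - fiber_map c t'\<bar>"
proof (cases "beta t = beta t'")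
  case True
  have "t = binval (beta t)" using binval_beta[OF t] by simp
  also have "\<dots> = t'" using True binval_beta[OF t'] by simp
  finally show ?thesis by simp
next
  case False
  have "beta t 0 = beta t' 0" using beta_0[OF t] beta_0[OF t'] by simp
  then obtain k where agree: "\<forall>n\<le>k. beta t n = beta t' n" and differ: "beta t (Suc k) \<noteq> beta t' (Suc k)"
    by (rule first_difference_exists[OF False])
  have "\<bar>t - t'\<bar> \<le> (1/2) ^ k"
    using abs_binval_diff_le[OF binary_seq_beta[OF t] binary_seq_beta[OF t'] agree]
    by (simp add: binval_beta t t')
  then have "(t - t')\<^sup>2 \<le> ((1/2) ^ k)\<^sup>2"
    by (metis abs_ge_zero power2_abs power_mono)
  also have "((1/2::real) ^ k)\<^sup>2 = ((1/2)\<^sup>2) ^ k"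
    by (simp only: power_mult[symmetric] mult.commute)
  also have "\<dots> = 12 * (1 / (3 * 4 ^ Suc k))"
    by (simp add: power_one_over)
  also have "1 / (3 * 4 ^ Suc k) \<le> \<bar>fiber_map c t - fiber_map c t'\<bar>"
  proof -
    consider "beta t (Suc k) = 1" "beta t' (Suc k) = 0" | "beta t (Suc k) = 0" "beta t' (Suc k) = 1"
      using differ binary_seq_cases[OF binary_seq_beta[OF t]] binary_seq_cases[OF binary_seq_beta[OF t']]
      by metis
    then show ?thesis
    proof cases
      case 1
      then show ?thesis
        using fiber_map_gap[OF t t' agree 1, of c] abs_ge_self order_trans by blast
    next
      case 2
      have "\<forall>n\<le>k. beta t' n = beta t n" using agree by simp
      then show ?thesis
        using fiber_map_gap[OF t' t _ 2(2,1), of c] abs_ge_self[of "fiber_map c t' - fiber_map c t"]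
        by (simp add: abs_minus_commute)
    qed
  qed
  finally show ?thesis by simp
qed


section \<open>Hausdorff measure and dimension\<close>

lemma hausdorff_dim_geI:
  assumes "\<And>s. 0 \<le> s \<Longrightarrow> s < d \<Longrightarrow> hausdorff_measure s A \<noteq> 0"
  shows "ereal d \<le> hausdorff_dim A"
  unfolding hausdorff_dim_def
proof (rule Inf_greatest)
  fix z assume "z \<in> {ereal s |s. 0 \<le> s \<and> hausdorff_measure s A = 0}"
  then obtain s where "z = ereal s" "0 \<le> s" "hausdorff_measure s A = 0" by auto
  with assms show "ereal d \<le> z" by force
qed

lemma hausdorff_dim_leI:
  assumes "0 \<le> d" "\<And>s. d < s \<Longrightarrow> hausdorff_measure s A = 0"
  shows "hausdorff_dim A \<le> ereal d"
proof (rule ereal_le_epsilon2)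
  fix e :: real assume "0 < e"
  then have "ereal (d + e) \<in> {ereal s |s. 0 \<le> s \<and> hausdorff_measure s A = 0}"
    using assms by auto
  then have "hausdorff_dim A \<le> ereal (d + e)"
    unfolding hausdorff_dim_def by (rule Inf_lower)
  then show "hausdorff_dim A \<le> ereal d + ereal e" by simp
qed

lemma hausdorff_measure_eq_0I:
  assumes "\<And>\<delta> e. 0 < \<delta> \<Longrightarrow> 0 < e \<Longrightarrow> \<exists>\<U>. finite \<U> \<and> A \<subseteq> \<Union>\<U> \<and>
             (\<forall>U\<in>\<U>. bounded U \<and> diameter U \<le> \<delta>) \<and> (\<Sum>U\<in>\<U>. diameter U powr s) \<le> e"
  shows "hausdorff_measure s A = 0"
proof -
  have bound: "hausdorff_pre s \<delta> A \<le> ennreal e" if pos: "0 < \<delta>" "0 < e" for \<delta> e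
  proof -
    obtain \<U> where \<U>: "finite \<U>" "A \<subseteq> \<Union>\<U>" "\<And>U. U \<in> \<U> \<Longrightarrow> bounded U \<and> diameter U \<le> \<delta>"
      and sum: "(\<Sum>U\<in>\<U>. diameter U powr s) \<le> e"
      using assms[OF pos] by blast
    define N where "N = card \<U>"
    obtain h where h: "bij_betw h {0..<N} \<U>"
      using ex_bij_betw_nat_finite[OF \<U>(1)] unfolding N_def by blast
    define V where "V i = (if i < N then h i else {})" for i
    have "A \<subseteq> (\<Union>i. V i)"
      using \<U>(2) h unfolding V_def bij_betw_def by force
    moreover have "bounded (V i) \<and> diameter (V i) \<le> \<delta>" for i
      using \<U>(3) bij_betwE[OF h] \<open>0 < \<delta>\<close> by (simp add: V_def)
    ultimately have "hausdorff_pre s \<delta> A \<le> (\<Sum>i. ennreal (diameter (V i) powr s))"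
      unfolding hausdorff_pre_def by (intro INF_lower) auto
    also have "\<dots> = (\<Sum>i<N. ennreal (diameter (h i) powr s))"
      by (subst suminf_finite[of "{..<N}"]) (simp_all add: V_def)
    also have "\<dots> = ennreal (\<Sum>U\<in>\<U>. diameter U powr s)"
      using sum.reindex_bij_betw[OF h, of "\<lambda>U. diameter U powr s"]
      by (simp add: lessThan_atLeast0 sum_ennreal)
    also have "\<dots> \<le> ennreal e" using sum by (rule ennreal_leI)
    finally show ?thesis .
  qed
  have "hausdorff_pre s \<delta> A = 0" if "0 < \<delta>" for \<delta>
  proof -
    have "hausdorff_pre s \<delta> A \<le> 0"
    proof (rule ennreal_le_epsilon)
      fix e :: real assume "0 < e"
      then show "hausdorff_pre s \<delta> A \<le> 0 + ennreal e" using bound[OF that] by simp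
    qed
    then show ?thesis by simp
  qed
  then show ?thesis unfolding hausdorff_measure_def by simp
qed

lemma inverse_holder_preimage_cover:
  fixes g :: "real \<Rightarrow> real"
  assumes holder: "\<And>t t'. t \<in> V \<Longrightarrow> t' \<in> V \<Longrightarrow> (t - t')\<^sup>2 \<le> K * \<bar>g t - g t'\<bar>"
    and "0 \<le> K" "bounded U" "g ` V \<subseteq> U"
  obtains W where "V \<subseteq> W" "W \<in> sets lborel"
    "emeasure lborel W \<le> ennreal (2 * sqrt (K * diameter U))"
proof (cases "V = {}")
  case True
  then show ?thesis by (intro that[of "{}"]) auto
next
  case False
  then obtain t0 where t0: "t0 \<in> V" by blast
  define r where "r = sqrt (K * diameter U)"
  have "V \<subseteq> cball t0 r"
  proof
    fix t assume t: "t \<in> V"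
    have "\<bar>g t0 - g t\<bar> \<le> diameter U"
      using diameter_bounded_bound[OF \<open>bounded U\<close>] t0 t assms(4) by (auto simp: dist_real_def)
    then have "(t0 - t)\<^sup>2 \<le> K * diameter U"
      using holder[OF t0 t] mult_left_mono[OF _ \<open>0 \<le> K\<close>] by (meson order_trans)
    then have "\<bar>t0 - t\<bar> \<le> r" unfolding r_def by (intro real_le_rsqrt) simp
    then show "t \<in> cball t0 r" by (simp add: dist_real_def)
  qed
  moreover have "0 \<le> r"
    unfolding r_def using \<open>0 \<le> K\<close> diameter_ge_0[OF \<open>bounded U\<close>] by simp
  then have "emeasure lborel (cball t0 r) = ennreal (2 * r)"
    by (simp add: cball_eq_atLeastAtMost emeasure_lborel_Icc)
  ultimately show ?thesis by (intro that[of "cball t0 r"]) (auto simp: r_def)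
qed

text \<open>Cover (0,1] by the preimages of the U i; for diameters at most 1 and s \<le> 1/2,
  the bound sqrt (diameter U) \<le> diameter U powr s makes the Lebesgue measure of (0,1]
  a lower bound for the s-dimensional sum.\<close>

lemma inverse_holder_cover_sum_ge:
  fixes g :: "real \<Rightarrow> real"
  assumes holder: "\<And>t t'. t \<in> {0<..1} \<Longrightarrow> t' \<in> {0<..1} \<Longrightarrow> (t - t')\<^sup>2 \<le> K * \<bar>g t - g t'\<bar>"
    and "0 < K" and s: "0 \<le> s" "s \<le> 1/2"
    and cover: "g ` {0<..1} \<subseteq> (\<Union>i. U i)" and U: "\<And>i. bounded (U i)" "\<And>i. diameter (U i) \<le> 1"
  shows "ennreal (1 / (2 * sqrt K)) \<le> (\<Sum>i. ennreal (diameter (U i) powr s))"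
proof -
  define C where "C = 2 * sqrt K"
  have "0 < C" unfolding C_def using \<open>0 < K\<close> by simp
  define V where "V i = {t \<in> {0<..1}. g t \<in> U i}" for i
  have "\<exists>W. V i \<subseteq> W \<and> W \<in> sets lborel \<and> emeasure lborel W \<le> ennreal (2 * sqrt (K * diameter (U i)))"
    for i
    by (rule inverse_holder_preimage_cover[where V = "V i" and g = g and K = K and U = "U i"])
       (use holder \<open>0 < K\<close> U(1) in \<open>auto simp: V_def\<close>)
  then obtain W where W: "\<And>i. V i \<subseteq> W i" "\<And>i. W i \<in> sets lborel"
    "\<And>i. emeasure lborel (W i) \<le> ennreal (2 * sqrt (K * diameter (U i)))"
    by metis
  have small: "2 * sqrt (K * diameter (U i)) \<le> C * diameter (U i) powr s" for i
  proof -
    have "0 \<le> diameter (U i)" by (rule diameter_ge_0[OF U(1)])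
    then have "sqrt (diameter (U i)) \<le> diameter (U i) powr s"
      using U(2)[of i] s by (cases "diameter (U i) = 0") (auto simp: powr_half_sqrt[symmetric] intro: powr_mono')
    then show ?thesis
      unfolding C_def using \<open>0 < K\<close> by (simp add: real_sqrt_mult)
  qed
  have "{0<..1::real} \<subseteq> (\<Union>i. W i)" using cover W(1) unfolding V_def by blast
  then have "emeasure lborel {0<..1::real} \<le> emeasure lborel (\<Union>i. W i)"
    by (rule emeasure_mono) (use W(2) in auto)
  also have "\<dots> \<le> (\<Sum>i. emeasure lborel (W i))"
    by (rule emeasure_subadditive_countably) (use W(2) in auto)
  also have "\<dots> \<le> (\<Sum>i. ennreal (C * diameter (U i) powr s))"
    using W(3) small by (intro suminf_le summableI) (meson ennreal_leI order_trans)
  also have "\<dots> = ennreal C * (\<Sum>i. ennreal (diameter (U i) powr s))"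
    using \<open>0 < C\<close> by (simp add: ennreal_mult)
  finally have "1 \<le> ennreal C * (\<Sum>i. ennreal (diameter (U i) powr s))" by simp
  then have "ennreal (1 / C) * 1 \<le> ennreal (1 / C) * (ennreal C * (\<Sum>i. ennreal (diameter (U i) powr s)))"
    by (rule mult_left_mono) simp
  also have "\<dots> = (\<Sum>i. ennreal (diameter (U i) powr s))"
    using \<open>0 < C\<close> by (simp add: mult.assoc[symmetric] ennreal_mult[symmetric])
  finally show ?thesis unfolding C_def by simp
qed

lemma hausdorff_measure_ne_0_of_inverse_holder:
  fixes g :: "real \<Rightarrow> real"
  assumes "\<And>t t'. t \<in> {0<..1} \<Longrightarrow> t' \<in> {0<..1} \<Longrightarrow> (t - t')\<^sup>2 \<le> K * \<bar>g t - g t'\<bar>"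
    and "0 < K" "0 \<le> s" "s \<le> 1/2" "g ` {0<..1} \<subseteq> A"
  shows "hausdorff_measure s A \<noteq> 0"
proof -
  have "ennreal (1 / (2 * sqrt K)) \<le> hausdorff_pre s 1 A"
    unfolding hausdorff_pre_def
    using inverse_holder_cover_sum_ge[OF assms(1-4)] assms(5) by (intro INF_greatest) blast
  also have "\<dots> \<le> hausdorff_measure s A"
    unfolding hausdorff_measure_def by (rule SUP_upper) simp
  finally show ?thesis using \<open>0 < K\<close> by auto
qed


section \<open>Counting admissible words\<close>

text \<open>A word is admissible for the target digits c if its k-th letter True sits at an even
  position iff c k holds; the flag p records whether the current position is even.\<close>

fun admissible :: "(nat \<Rightarrow> bool) \<Rightarrow> bool \<Rightarrow> bool list \<Rightarrow> bool" where
  "admissible c p [] = True"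
| "admissible c p (x # xs) =
     (if x then c 0 = p \<and> admissible (\<lambda>k. c (Suc k)) (\<not> p) xs else admissible c (\<not> p) xs)"

lemma finite_bool_lists_length: "finite {w :: bool list. length w = n \<and> P w}"
  using finite_lists_length_eq[of "UNIV :: bool set" n] by (rule finite_subset[rotated]) auto

lemma admissible_replicate_False: "admissible c p (replicate n False)"
  by (induction n arbitrary: p) auto

lemma admissible_length_Suc_Suc_subset:
  "{w. length w = Suc (Suc n) \<and> admissible c p w} \<subseteq>
     (\<lambda>w. False # False # w) ` {w. length w = n \<and> admissible c p w} \<union>
     (\<lambda>w. True # w) ` {w. length w = Suc n \<and> c 0 = p \<and> admissible (\<lambda>k. c (Suc k)) (\<not> p) w} \<union>
     (\<lambda>w. False # True # w) ` {w. length w = n \<and> c 0 = (\<not> p) \<and> admissible (\<lambda>k. c (Suc k)) p w}"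
proof
  fix w assume "w \<in> {w. length w = Suc (Suc n) \<and> admissible c p w}"
  then obtain a b v where w: "w = a # b # v" "length v = n" "admissible c p (a # b # v)"
    by (auto simp: length_Suc_conv)
  then show "w \<in> (\<lambda>w. False # False # w) ` {w. length w = n \<and> admissible c p w} \<union>
     (\<lambda>w. True # w) ` {w. length w = Suc n \<and> c 0 = p \<and> admissible (\<lambda>k. c (Suc k)) (\<not> p) w} \<union>
     (\<lambda>w. False # True # w) ` {w. length w = n \<and> c 0 = (\<not> p) \<and> admissible (\<lambda>k. c (Suc k)) p w}"
    by (cases a; cases b) (auto split: if_splits)
qed

lemma card_admissible_le: "card {w. length w = n \<and> admissible c p w} \<le> fib (Suc (Suc n))"
proof (induction n arbitrary: c p rule: fib.induct)
  case 1
  have "{w :: bool list. length w = 0 \<and> admissible c p w} \<subseteq> {[]}" by auto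
  from card_mono[OF _ this] show ?case by simp
next
  case 2
  have "{w :: bool list. length w = Suc 0 \<and> admissible c p w} \<subseteq> {[True], [False]}"
    by (auto simp: length_Suc_conv)
  from card_mono[OF _ this] show ?case by simp
next
  case (3 n)
  let ?A = "{w. length w = n \<and> admissible c p w}"
  let ?B = "{w. length w = Suc n \<and> c 0 = p \<and> admissible (\<lambda>k. c (Suc k)) (\<not> p) w}"
  let ?C = "{w. length w = n \<and> c 0 = (\<not> p) \<and> admissible (\<lambda>k. c (Suc k)) p w}"
  have "card ?A \<le> fib (Suc (Suc n))" by (rule "3.IH"(2))
  moreover have "card ?B \<le> (if c 0 = p then fib (Suc (Suc (Suc n))) else 0)"
    using "3.IH"(1)[of "\<lambda>k. c (Suc k)" "\<not> p"] by auto
  moreover have "card ?C \<le> (if c 0 = p then 0 else fib (Suc (Suc n)))"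
    using "3.IH"(2)[of "\<lambda>k. c (Suc k)" p] by auto
  moreover note fib_Suc_mono[of "Suc (Suc n)"]
  ultimately have "card ?A + card ?B + card ?C \<le> fib (Suc (Suc (Suc (Suc n))))"
    by (cases "c 0 = p") auto
  moreover have "card {w. length w = Suc (Suc n) \<and> admissible c p w}
      \<le> card ?A + card ?B + card ?C"
    by (rule order_trans[OF card_mono[OF _ admissible_length_Suc_Suc_subset]])
       (simp_all add: finite_bool_lists_length card_Un_le card_image_le
         order_trans[OF card_Un_le] add_mono)
  ultimately show ?case by simp
qed

definition golden_ratio :: real where
  "golden_ratio = (1 + sqrt 5) / 2"

lemma golden_ratio_gt_1: "1 < golden_ratio"
  unfolding golden_ratio_def using real_sqrt_gt_1_iff[of 5] by simp

lemma fib_le_golden_ratio_power: "real (fib n) \<le> golden_ratio ^ n"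
proof (induction n rule: fib.induct)
  case (3 n)
  have "real (fib (Suc (Suc n))) = real (fib (Suc n)) + real (fib n)" by simp
  also have "\<dots> \<le> golden_ratio ^ Suc n + golden_ratio ^ n" using 3 by (rule add_mono)
  also have "\<dots> = golden_ratio ^ n * (golden_ratio + 1)" by (simp add: algebra_simps)
  also have "golden_ratio + 1 = golden_ratio\<^sup>2"
    by (simp add: golden_ratio_def power2_eq_square field_simps)
  also have "golden_ratio ^ n * golden_ratio\<^sup>2 = golden_ratio ^ Suc (Suc n)"
    by (simp add: power2_eq_square)
  finally show ?case .
qed (use golden_ratio_gt_1 in simp_all)


section \<open>Covering a fiber by dyadic intervals\<close>

definition prefix_word :: "(nat \<Rightarrow> nat) \<Rightarrow> nat \<Rightarrow> bool list" where
  "prefix_word b n = map (\<lambda>j. b j = 1) [1..<Suc n]"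

definition word_value :: "bool list \<Rightarrow> real" where
  "word_value w = (\<Sum>i<length w. (if w ! i then 1 else 0) / 2 ^ Suc i)"

lemma word_value_prefix_word:
  assumes "binary_seq b"
  shows "word_value (prefix_word b n) = (\<Sum>i<n. digit_term b i)"
  unfolding word_value_def prefix_word_def digit_term_def
  using binary_seq_cases[OF assms] by (intro sum.cong) (auto simp del: upt_Suc simp: nth_upt)

lemma admissible_prefix_word:
  assumes ones: "infinite {n. 1 \<le> n \<and> b n = 1}"
  shows "admissible (\<lambda>k. rho b (Suc k) = 1) False (prefix_word b n)"
proof -
  have from_i: "admissible (\<lambda>k. rho b (Suc (ones_below b i + k)) = 1) (even i)
      (map (\<lambda>j. b j = 1) [i..<i + n])" if "1 \<le> i" for i
    using that
  proof (induction n arbitrary: i)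
    case (Suc n)
    have upt: "[i..<i + Suc n] = i # [Suc i..<Suc i + n]" by (simp add: upt_conv_Cons)
    have IH: "admissible (\<lambda>k. rho b (Suc (ones_below b (Suc i) + k)) = 1) (\<not> even i)
        (map (\<lambda>j. b j = 1) [Suc i..<Suc i + n])"
      using Suc.IH[of "Suc i"] by simp
    show ?case
    proof (cases "b i = 1")
      case True
      then show ?thesis
        using IH ones_below_Suc[OF Suc.prems, of b] rho_at_one[OF ones Suc.prems True]
        unfolding upt by simp
    next
      case False
      then show ?thesis using IH ones_below_Suc[OF Suc.prems, of b] unfolding upt by simp
    qed
  qed simp
  moreover have "ones_below b 1 = 0" by (simp add: ones_below_def)
  ultimately show ?thesis using from_i[of 1] unfolding prefix_word_def by (simp del: upt_Suc)
qed

lemma at_most_two_binary_expansions: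
  obtains c1 c2 where "\<And>c. binary_seq c \<Longrightarrow> c 0 = 0 \<Longrightarrow> binval c = y \<Longrightarrow> c = c1 \<or> c = c2"
proof -
  let ?E = "\<lambda>c. binary_seq c \<and> c 0 = 0 \<and> binval c = y"
  have unique: "c = c'" if "?E c" "?E c'" "finite {n. c n = 1} \<longleftrightarrow> finite {n. c' n = 1}" for c c'
  proof (rule ccontr)
    assume "c \<noteq> c'"
    then have "finite {n. c n = 1} \<longleftrightarrow> infinite {n. c' n = 1}"
      using binval_eq_finite_ones_iff[of c c'] that(1,2) by simp
    with that(3) show False by simp
  qed
  define c1 where "c1 = (SOME c. ?E c \<and> finite {n. c n = 1})"
  define c2 where "c2 = (SOME c. ?E c \<and> infinite {n. c n = 1})"
  have "c = c1 \<or> c = c2" if c: "?E c" for c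
  proof (cases "finite {n. c n = 1}")
    case True
    with c have "\<exists>c. ?E c \<and> finite {n. c n = 1}" by blast
    then have "?E c1 \<and> finite {n. c1 n = 1}" unfolding c1_def by (rule someI_ex)
    then show ?thesis using unique[OF c] True by blast
  next
    case False
    with c have "\<exists>c. ?E c \<and> infinite {n. c n = 1}" by blast
    then have "?E c2 \<and> infinite {n. c2 n = 1}" unfolding c2_def by (rule someI_ex)
    then show ?thesis using unique[OF c] False by blast
  qed
  then show ?thesis using that by blast
qed

lemma fiber_in_word_interval:
  assumes x: "x \<in> {0..1}" "R x = y"
    and two: "\<And>c. binary_seq c \<Longrightarrow> c 0 = 0 \<Longrightarrow> binval c = y \<Longrightarrow> c = c1 \<or> c = c2"
  shows "\<exists>w. length w = n \<and>
           (admissible (\<lambda>k. c1 (Suc k) = 1) False w \<or> admissible (\<lambda>k. c2 (Suc k) = 1) False w) \<and>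
           x \<in> {word_value w .. word_value w + (1/2) ^ n}"
proof (cases "x = 0")
  case True
  then show ?thesis using admissible_replicate_False
    by (intro exI[of _ "replicate n False"]) (simp add: word_value_def)
next
  case False
  with x(1) have t: "0 < x" "x \<le> 1" by auto
  let ?b = "beta x"
  have "rho ?b = c1 \<or> rho ?b = c2"
    using two[OF binary_seq_rho rho_0] R_eq_binval_rho[OF False] x(2) by simp
  moreover have "{n. ?b n = 1} \<subseteq> insert 0 {n. 1 \<le> n \<and> ?b n = 1}" by auto
  then have "infinite {n. 1 \<le> n \<and> ?b n = 1}"
    using infinite_ones_beta[OF t] finite_subset by auto
  then have "admissible (\<lambda>k. rho ?b (Suc k) = 1) False (prefix_word ?b n)"
    by (rule admissible_prefix_word)
  moreover have "x = word_value (prefix_word ?b n) + binval_tail ?b n"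
    using binval_split[OF binary_seq_beta[OF t], of n] binval_beta[OF t]
      word_value_prefix_word[OF binary_seq_beta[OF t]] by simp
  moreover note binval_tail_nonneg[OF binary_seq_beta[OF t], of n]
    binval_tail_le[OF binary_seq_beta[OF t], of n]
  ultimately show ?thesis
    by (intro exI[of _ "prefix_word ?b n"]) (auto simp: prefix_word_def)
qed

lemma card_admissible_either_le:
  "real (card {w. length w = n \<and> (admissible c p w \<or> admissible c' p' w)})
     \<le> 2 * golden_ratio\<^sup>2 * golden_ratio ^ n"
proof -
  have "card {w. length w = n \<and> (admissible c p w \<or> admissible c' p' w)}
      \<le> card {w. length w = n \<and> admissible c p w} + card {w. length w = n \<and> admissible c' p' w}"
    by (rule order_trans[OF _ card_Un_le]) (simp add: Collect_disj_eq[symmetric] conj_disj_distribL)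
  also have "\<dots> \<le> 2 * fib (Suc (Suc n))"
    using card_admissible_le[of n c p] card_admissible_le[of n c' p'] by linarith
  finally have "real (card {w. length w = n \<and> (admissible c p w \<or> admissible c' p' w)})
      \<le> 2 * real (fib (Suc (Suc n)))"
    by (metis of_nat_mono of_nat_mult of_nat_numeral)
  also have "\<dots> \<le> 2 * golden_ratio ^ Suc (Suc n)"
    using fib_le_golden_ratio_power[of "Suc (Suc n)"] by linarith
  also have "\<dots> = 2 * golden_ratio\<^sup>2 * golden_ratio ^ n"
    by (simp add: power2_eq_square)
  finally show ?thesis .
qed

lemma power_powr: "0 < x \<Longrightarrow> (x ^ n) powr s = (x powr s) ^ n" for x :: real
  by (simp add: powr_realpow[symmetric] powr_powr powr_power mult.commute)

lemma hausdorff_measure_fiber_eq_0: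
  assumes s: "log 2 golden_ratio < s"
  shows "hausdorff_measure s {x \<in> {0..1}. R x = y} = 0"
proof (rule hausdorff_measure_eq_0I)
  fix \<delta> e :: real assume "0 < \<delta>" "0 < e"
  obtain c1 c2 where two: "\<And>c. binary_seq c \<Longrightarrow> c 0 = 0 \<Longrightarrow> binval c = y \<Longrightarrow> c = c1 \<or> c = c2"
    using at_most_two_binary_expansions[where y = y] by blast
  have "0 < log 2 golden_ratio" using golden_ratio_gt_1 by simp
  with s have "0 < s" by linarith
  define r where "r = golden_ratio / 2 powr s"
  have "golden_ratio < 2 powr s"
    using powr_less_mono[OF s, of 2] golden_ratio_gt_1 by simp
  then have "0 \<le> r" "r < 1" unfolding r_def using golden_ratio_gt_1 by simp_all
  then have "\<forall>\<^sub>F n in sequentially. 2 * golden_ratio\<^sup>2 * r ^ n < e \<and> (1/2) ^ n < \<delta>"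
    using \<open>0 < e\<close> \<open>0 < \<delta>\<close> golden_ratio_gt_1
    by (intro eventually_conj order_tendstoD(2)[OF LIMSEQ_power_zero]
        order_tendstoD(2)[OF tendsto_mult_right_zero[OF LIMSEQ_power_zero]]) simp_all
  then obtain n where n: "2 * golden_ratio\<^sup>2 * r ^ n < e" "(1/2) ^ n < \<delta>"
    using eventually_sequentially by auto
  define q :: real where "q = (1/2) ^ n"
  define W where "W = {w. length w = n \<and>
    (admissible (\<lambda>k. c1 (Suc k) = 1) False w \<or> admissible (\<lambda>k. c2 (Suc k) = 1) False w)}"
  let ?U = "(\<lambda>w. {word_value w .. word_value w + q}) ` W"
  show "\<exists>\<U>. finite \<U> \<and> {x \<in> {0..1}. R x = y} \<subseteq> \<Union>\<U> \<and>
          (\<forall>U\<in>\<U>. bounded U \<and> diameter U \<le> \<delta>) \<and> (\<Sum>U\<in>\<U>. diameter U powr s) \<le> e"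
  proof (intro exI conjI)
    show "finite ?U" unfolding W_def by (intro finite_imageI finite_bool_lists_length)
    show "{x \<in> {0..1}. R x = y} \<subseteq> \<Union>?U"
    proof
      fix x assume "x \<in> {x \<in> {0..1}. R x = y}"
      then have "x \<in> {0..1}" "R x = y" by simp_all
      from fiber_in_word_interval[OF this two, where n = n]
      obtain w where "w \<in> W" "x \<in> {word_value w .. word_value w + q}"
        unfolding W_def q_def by blast
      then show "x \<in> \<Union>?U" by blast
    qed
    show "\<forall>U\<in>?U. bounded U \<and> diameter U \<le> \<delta>"
      using n(2) unfolding q_def by auto
    have "(\<Sum>U\<in>?U. diameter U powr s) \<le> (\<Sum>w\<in>W. diameter {word_value w .. word_value w + q} powr s)"
      by (rule sum_image_le[unfolded comp_def]) (simp_all add: W_def finite_bool_lists_length)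
    also have "\<dots> = real (card W) * (1 / 2 powr s) ^ n"
      using \<open>0 < s\<close> by (simp add: q_def power_powr powr_divide)
    also have "\<dots> \<le> 2 * golden_ratio\<^sup>2 * golden_ratio ^ n * (1 / 2 powr s) ^ n"
      using card_admissible_either_le unfolding W_def by (rule mult_right_mono) simp
    also have "\<dots> = 2 * golden_ratio\<^sup>2 * r ^ n"
      by (simp add: r_def power_divide)
    finally show "(\<Sum>U\<in>?U. diameter U powr s) \<le> e" using n(1) by simp
  qed
qed

theorem proposition5p8:
  fixes y :: real
  assumes "y \<in> {0..1}"
  shows "ereal (1/2) \<le> hausdorff_dim {x \<in> {0..1}. R x = y}
       \<and> hausdorff_dim {x \<in> {0..1}. R x = y} \<le> ereal (log 2 ((1 + sqrt 5) / 2))"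
proof
  obtain c where c: "binary_seq c" "c 0 = 0" "binval c = y"
    using binval_surj assms by auto
  show "ereal (1/2) \<le> hausdorff_dim {x \<in> {0..1}. R x = y}"
  proof (rule hausdorff_dim_geI)
    fix s :: real assume "0 \<le> s" "s < 1/2"
    then show "hausdorff_measure s {x \<in> {0..1}. R x = y} \<noteq> 0"
      using fiber_map_inverse_holder[of _ _ c] fiber_map_into_fiber[OF c]
      by (intro hausdorff_measure_ne_0_of_inverse_holder[where g = "fiber_map c" and K = 12]) auto
  qed
  have "0 \<le> log 2 golden_ratio" using golden_ratio_gt_1 by simp
  then show "hausdorff_dim {x \<in> {0..1}. R x = y} \<le> ereal (log 2 ((1 + sqrt 5) / 2))"
    unfolding golden_ratio_def[symmetric] using hausdorff_measure_fiber_eq_0 by (rule hausdorff_dim_leI)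
qed

end
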